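(* A formal power series $\varphi(x)\in\mathbb{C}[[x]]$ is symplectic if and only if there exists a formal power series $\rho(y)\in\mathbb{C}[[y]]$ such that $\varphi(x)=\rho\big(x^2/(1-x)\big)$ (formal composition).
   Context: A formal power series $\varphi(x)=\sum_{i\ge0}\gamma_i x^i\in\mathbb{C}[[x]]$ is called symplectic if for every $m\ge1$ one has $\sum_{k=0}^{m-1}(-1)^k\binom{m-1}{k}\gamma_{m+k}=0$. Here $x^2/(1-x)=\sum_{j\ge2}x^j$ has zero constant term, so the composite is a well-defined formal power series. *)

theory Defs
  imports "HOL-Computational_Algebra.Formal_Power_Series" Complex_Main
begin

definition symplectic_fps :: "complex fps \<Rightarrow> bool" where
  "symplectic_fps f \<longleftrightarrow>
     (\<forall>m::nat. m \<ge> 1 \<longrightarrow>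
        (\<Sum>k = 0..m - 1. (-1) ^ k * of_nat ((m - 1) choose k) * fps_nth f (m + k)) = 0)"

end

theory Submission
  imports Defs
begin

unbundle fps_syntax

text \<open>
  Put U = x^2/(1 - x). The n-th symplectic condition says that the coefficient of x^(2n+1)
  in (1 - x)^n \<phi> vanishes. For \<phi> = U^j the product (1 - x)^n U^j is x^(2j) times a polynomial
  of degree n - j if j \<le> n, and is divisible by x^(2n+2) otherwise; so every U^j, and by
  linearity every \<rho>(U), is symplectic. Conversely, the n-th condition expresses the coefficient
  of x^(2n+1) through lower ones, so a symplectic series is determined by its even coefficients.
  Since U^j = x^(2j) + (higher terms), every sequence of even coefficients is attained by some
  \<rho>(U), by solving a unitriangular linear system.
\<close>

text \<open>The symplectic condition for m = n + 1, shifted to avoid truncated subtraction.\<close>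

definition sympl_sum :: "nat \<Rightarrow> 'a::comm_ring_1 fps \<Rightarrow> 'a" where
  "sympl_sum n f = (\<Sum>k\<le>n. (-1) ^ k * of_nat (n choose k) * f $ (Suc n + k))"

lemma symplectic_fps_iff_sympl_sum: "symplectic_fps f \<longleftrightarrow> (\<forall>n. sympl_sum n f = 0)"
  unfolding symplectic_fps_def sympl_sum_def atLeast0AtMost
  by (auto dest!: Suc_le_D)

lemma sympl_sum_diff: "sympl_sum n (f - g) = sympl_sum n f - sympl_sum n g"
  by (simp add: sympl_sum_def algebra_simps sum_subtractf)

lemma one_minus_fps_X_power_nth:
  "((1 - fps_X) ^ n :: 'a::comm_ring_1 fps) $ i = (-1) ^ i * of_nat (n choose i)"
proof (induction n arbitrary: i)
  case 0
  then show ?case by (cases i) auto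
next
  case (Suc n)
  have "(1 - fps_X) ^ Suc n = (1 - fps_X) ^ n - fps_X * (1 - fps_X :: 'a fps) ^ n"
    by (simp add: algebra_simps)
  with Suc.IH show ?case by (cases i) (simp_all add: algebra_simps)
qed

lemma sympl_sum_eq_nth_mult_power:
  fixes f :: "'a::comm_ring_1 fps"
  shows "sympl_sum n f = (-1) ^ n * ((1 - fps_X) ^ n * f) $ (2 * n + 1)"
proof -
  have "((1 - fps_X) ^ n * f) $ (2 * n + 1)
      = (\<Sum>i\<le>2 * n + 1. (-1) ^ i * of_nat (n choose i) * f $ (2 * n + 1 - i))"
    by (simp add: fps_mult_nth one_minus_fps_X_power_nth atLeast0AtMost)
  also have "\<dots> = (\<Sum>i\<le>n. (-1) ^ i * of_nat (n choose i) * f $ (2 * n + 1 - i))"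
    by (rule sum.mono_neutral_right) (simp_all add: binomial_eq_0)
  also have "\<dots> = (\<Sum>k\<le>n. (-1) ^ (n - k) * of_nat (n choose k) * f $ (Suc n + k))"
    by (subst sum.atLeastAtMost_rev[of _ 0 n, simplified atLeast0AtMost])
       (intro sum.cong refl, simp add: binomial_symmetric[symmetric] Suc_diff_le)
  finally have "(-1) ^ n * ((1 - fps_X) ^ n * f) $ (2 * n + 1)
      = (\<Sum>k\<le>n. ((-1) ^ n * (-1) ^ (n - k)) * of_nat (n choose k) * f $ (Suc n + k))"
    by (simp add: sum_distrib_left mult_ac)
  also have "\<dots> = sympl_sum n f"
    unfolding sympl_sum_def
  proof (intro sum.cong refl)
    fix k assume "k \<in> {..n}"
    then have "n + (n - k) = k + 2 * (n - k)" by simp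
    then have "(-1 :: 'a) ^ n * (-1) ^ (n - k) = (-1) ^ (k + 2 * (n - k))"
      by (metis power_add)
    also have "\<dots> = (-1) ^ k"
      by (simp add: power_add power_mult)
    finally show "(-1) ^ n * (-1) ^ (n - k) * of_nat (n choose k) * f $ (Suc n + k)
        = (-1) ^ k * of_nat (n choose k) * f $ (Suc n + k)"
      by simp
  qed
  finally show ?thesis ..
qed

definition sympl_subst :: "'a::field fps" where
  "sympl_subst = fps_X ^ 2 / (1 - fps_X)"

lemma sympl_subst_power: "sympl_subst ^ j = fps_X ^ (2 * j) * inverse (1 - fps_X :: 'a::field fps) ^ j"
  by (simp add: sympl_subst_def fps_divide_unit power_mult_distrib power_mult)

lemma sympl_subst_power_nth_less: "n < 2 * j \<Longrightarrow> (sympl_subst ^ j :: 'a::field fps) $ n = 0"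
  by (simp add: sympl_subst_power fps_X_power_mult_nth)

lemma sympl_subst_power_nth_diag: "(sympl_subst ^ j :: 'a::field fps) $ (2 * j) = 1"
  by (simp add: sympl_subst_power fps_X_power_mult_nth fps_nth_power_0)

lemma sympl_sum_sympl_subst_power: "sympl_sum n (sympl_subst ^ j :: 'a::field fps) = 0"
proof (cases "j \<le> n")
  case True
  have "(1 - fps_X) ^ n * inverse (1 - fps_X) ^ j
      = (1 - fps_X) ^ (n - j) * ((1 - fps_X) * inverse (1 - fps_X :: 'a fps)) ^ j"
    using True by (simp add: power_mult_distrib mult_ac flip: power_add)
  then have factor: "(1 - fps_X) ^ n * sympl_subst ^ j = fps_X ^ (2 * j) * (1 - fps_X :: 'a fps) ^ (n - j)"
    by (simp add: sympl_subst_power mult_ac inverse_mult_eq_1')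
  show ?thesis
    unfolding sympl_sum_eq_nth_mult_power factor
    using True by (simp add: fps_X_power_mult_nth one_minus_fps_X_power_nth binomial_eq_0)
next
  case False
  have factor: "(1 - fps_X) ^ n * sympl_subst ^ j
      = fps_X ^ (2 * j) * ((1 - fps_X) ^ n * inverse (1 - fps_X :: 'a fps) ^ j)"
    by (simp add: sympl_subst_power mult_ac)
  show ?thesis
    unfolding sympl_sum_eq_nth_mult_power factor
    using False by (simp add: fps_X_power_mult_nth)
qed

lemma fps_compose_nth_atMost:
  assumes "g $ 0 = 0" and "k \<le> N"
  shows "(\<rho> oo g) $ k = (\<Sum>i\<le>N. \<rho> $ i * (g ^ i) $ k)"
  unfolding fps_compose_nth atLeast0AtMost
  by (rule sum.mono_neutral_left) (simp_all add: assms startsby_zero_power_prefix)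

lemma sympl_sum_compose:
  assumes "g $ 0 = 0"
  shows "sympl_sum n (\<rho> oo g) = (\<Sum>i\<le>2 * n + 1. \<rho> $ i * sympl_sum n (g ^ i))"
proof -
  have "sympl_sum n (\<rho> oo g) = (\<Sum>k\<le>n. (-1) ^ k * of_nat (n choose k) *
          (\<Sum>i\<le>2 * n + 1. \<rho> $ i * (g ^ i) $ (Suc n + k)))"
    unfolding sympl_sum_def
    by (intro sum.cong refl) (simp add: fps_compose_nth_atMost[OF assms, where N = "2 * n + 1"])
  then show ?thesis
    unfolding sympl_sum_def sum_distrib_left by (subst sum.swap) (simp add: mult_ac)
qed

lemma sympl_sum_compose_sympl_subst: "sympl_sum n (\<rho> oo sympl_subst :: 'a::field fps) = 0"
proof -
  have "sympl_subst $ 0 = (0 :: 'a)"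
    using sympl_subst_power_nth_less[of 0 1] by simp
  then show ?thesis
    by (simp add: sympl_sum_compose sympl_sum_sympl_subst_power)
qed

lemma fps_eq_0_if_sympl_sum_eq_0_and_even_nth_eq_0:
  fixes f :: "'a::idom fps"
  assumes sympl: "\<And>n. sympl_sum n f = 0" and even: "\<And>j. f $ (2 * j) = 0"
  shows "f = 0"
proof -
  have "f $ n = 0" for n
  proof (induction n rule: less_induct)
    case (less n)
    show ?case
    proof (cases "even n")
      case True
      then show ?thesis using even by (auto elim: evenE)
    next
      case False
      then obtain p where n: "n = 2 * p + 1" by (auto elim: oddE)
      have "0 = sympl_sum p f" by (simp add: sympl)
      also have "\<dots> = (\<Sum>k<p. (-1) ^ k * of_nat (p choose k) * f $ (Suc p + k)) + (-1) ^ p * f $ n"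
        by (simp add: sympl_sum_def n mult_2 flip: lessThan_Suc_atMost)
      also have "(\<Sum>k<p. (-1) ^ k * of_nat (p choose k) * f $ (Suc p + k)) = 0"
        by (rule sum.neutral) (auto simp: n less)
      finally show ?thesis by simp
    qed
  qed
  then show ?thesis by (simp add: fps_eq_iff)
qed

fun unitriangular_solve :: "(nat \<Rightarrow> 'a::comm_ring_1) \<Rightarrow> (nat \<Rightarrow> nat \<Rightarrow> 'a) \<Rightarrow> nat \<Rightarrow> 'a" where
  "unitriangular_solve a c j = a j - (\<Sum>i<j. unitriangular_solve a c i * c i j)"

declare unitriangular_solve.simps [simp del]

lemma unitriangular_solve_sum:
  assumes "\<And>j. c j j = 1"
  shows "(\<Sum>i\<le>j. unitriangular_solve a c i * c i j) = a j"
proof -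
  have "(\<Sum>i\<le>j. unitriangular_solve a c i * c i j)
      = (\<Sum>i<j. unitriangular_solve a c i * c i j) + unitriangular_solve a c j"
    by (simp add: assms flip: lessThan_Suc_atMost)
  also have "unitriangular_solve a c j = a j - (\<Sum>i<j. unitriangular_solve a c i * c i j)"
    by (rule unitriangular_solve.simps)
  finally show ?thesis by simp
qed

lemma ex_compose_sympl_subst_even_nth: "\<exists>\<rho>. \<forall>j. (\<rho> oo sympl_subst) $ (2 * j) = (a j :: 'a::field)"
proof (intro exI allI)
  define c where "c i j = (sympl_subst ^ i :: 'a fps) $ (2 * j)" for i j
  define \<rho> where "\<rho> = Abs_fps (unitriangular_solve a c)"
  fix j
  have "(\<rho> oo sympl_subst) $ (2 * j) = (\<Sum>i\<le>2 * j. unitriangular_solve a c i * c i j)"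
    by (simp add: fps_compose_nth atLeast0AtMost c_def \<rho>_def)
  also have "\<dots> = (\<Sum>i\<le>j. unitriangular_solve a c i * c i j)"
    by (rule sum.mono_neutral_right) (simp_all add: c_def sympl_subst_power_nth_less)
  also have "\<dots> = a j"
    by (rule unitriangular_solve_sum) (simp add: c_def sympl_subst_power_nth_diag)
  finally show "(\<rho> oo sympl_subst) $ (2 * j) = a j" .
qed

theorem proposition1p4:
  fixes \<phi> :: "complex fps"
  shows "symplectic_fps \<phi> \<longleftrightarrow>
         (\<exists>\<rho> :: complex fps. \<phi> = \<rho> oo (fps_X ^ 2 / (1 - fps_X)))"
  unfolding sympl_subst_def[symmetric]
proof
  assume "symplectic_fps \<phi>"
  then have sympl: "sympl_sum n \<phi> = 0" for n
    by (simp add: symplectic_fps_iff_sympl_sum)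
  obtain \<rho> where \<rho>: "\<And>j. (\<rho> oo sympl_subst) $ (2 * j) = \<phi> $ (2 * j)"
    using ex_compose_sympl_subst_even_nth[of "\<lambda>j. \<phi> $ (2 * j)"] by blast
  have "\<phi> - (\<rho> oo sympl_subst) = 0"
  proof (rule fps_eq_0_if_sympl_sum_eq_0_and_even_nth_eq_0)
    show "sympl_sum n (\<phi> - (\<rho> oo sympl_subst)) = 0" for n
      by (simp only: sympl_sum_diff sympl sympl_sum_compose_sympl_subst diff_self)
    show "(\<phi> - (\<rho> oo sympl_subst)) $ (2 * j) = 0" for j
      by (simp only: fps_sub_nth \<rho> diff_self)
  qed
  then show "\<exists>\<rho>. \<phi> = \<rho> oo sympl_subst" by auto
next
  assume "\<exists>\<rho>. \<phi> = \<rho> oo sympl_subst"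
  then show "symplectic_fps \<phi>"
    unfolding symplectic_fps_iff_sympl_sum using sympl_sum_compose_sympl_subst by blast
qed

end
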